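(* Let $n\ge2$, let $\mathbb{K}$ contain a primitive $n$-th root of unity $\zeta_n$, and let $\mathbb{L}/\mathbb{K}$ be a Galois extension of degree $N=n^m$ with Galois group generated by commuting $\theta_1,\dots,\theta_m$ such that $\mathbf{i}\mapsto\boldsymbol\theta^\mathbf{i}$ is a bijection $\Delta(n)^m\to G$. Suppose $\alpha_1,\dots,\alpha_m\in\mathbb{L}^\times$ satisfy $\theta_i(\alpha_j)=\alpha_j$ for $i\ne j$ and $\theta_i(\alpha_i)=\zeta_n\alpha_i$. Order $\Delta(n)^m=\{\mathbf{i}^{(1)},\dots,\mathbf{i}^{(N)}\}$ in reverse lexicographic order ($\mathbf{i}\prec\mathbf{i}'$ iff $i_k<i'_k$ for the largest index $k$ with $i_k\neq i'_k$), and put $\mathcal{B}_m=(\boldsymbol\alpha^{\mathbf{i}^{(1)}},\dots,\boldsymbol\alpha^{\mathbf{i}^{(N)}})$ and $X=(\boldsymbol\zeta^{\mathbf{i}^{(1)}},\dots,\boldsymbol\zeta^{\mathbf{i}^{(N)}})$, the points of $U_n^m$ where $U_n$ is the set of $n$-th roots of unity. Let $0\le r\le m(n-1)$. Then $\mathcal{B}_m$ is a $\mathbb{K}$-basis of $\mathbb{L}$, and for every $\mathbf{j}\in\Delta(n)^m$, \[\mathrm{ev}_{\mathcal{B}_m}(\boldsymbol\theta^\mathbf{j})=\big(\mathbf{x}^\mathbf{j}(\boldsymbol\zeta^{\mathbf{i}^{(1)}}),\dots,\mathbf{x}^\mathbf{j}(\boldsymbol\zeta^{\mathbf{i}^{(N)}})\big)\cdot\mathrm{Diag}(\mathcal{B}_m).\]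 Consequently, if $Y_{r,m}\in\mathbb{K}^{k\times N}$ is the matrix whose rows are the evaluation vectors $(\mathbf{x}^\mathbf{j}(\boldsymbol\zeta^{\mathbf{i}^{(1)}}),\dots,\mathbf{x}^\mathbf{j}(\boldsymbol\zeta^{\mathbf{i}^{(N)}}))$ for $\mathbf{j}\in\Delta(n)^m$ with $|\mathbf{j}|\le r$, then $Y_{r,m}$ is a generator matrix of the Hamming-metric code $\mathrm{HRM}_X(r,m)$, and $Y_{r,m}\,\mathrm{Diag}(\mathcal{B}_m)$ is a generator matrix of $\mathrm{RM}_{\boldsymbol\theta}(r,\mathbf{n})(\mathcal{B}_m)$, $\mathbf{n}=(n,\dots,n)$.
   Context: $\Delta(n)=\{0,\dots,n-1\}$; $\boldsymbol\theta^\mathbf{i}=\theta_1^{i_1}\circ\cdots\circ\theta_m^{i_m}$; $|\mathbf{j}|=\sum_kj_k$; $\boldsymbol\alpha^\mathbf{i}=\prod_k\alpha_k^{i_k}$; $\boldsymbol\zeta^\mathbf{i}=(\zeta_n^{i_1},\dots,\zeta_n^{i_m})\in\mathbb{K}^m$; $\mathbf{x}^\mathbf{j}=x_1^{j_1}\cdots x_m^{j_m}$. $\mathrm{Diag}(\mathcal{B}_m)$ is the $N\times N$ diagonal matrix with diagonal $\mathcal{B}_m$. For $\mathbf{b}\in\mathbb{L}^N$ and $P=\sum b_g g\in\mathbb{L}[G]$, $\mathrm{ev}_\mathbf{b}(P)=(P(b_1),\dots,P(b_N))$ with $P(x)=\sum b_gg(x)$, and $\mathcal{C}(\mathbf{b})=\{\mathrm{ev}_\mathbf{b}(c):c\in\mathcal{C}\}$.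 $\mathrm{RM}_{\boldsymbol\theta}(r,\mathbf{n})=\mathrm{span}_\mathbb{L}\{\boldsymbol\theta^\mathbf{j}:\mathbf{j}\in\Delta(n)^m,|\mathbf{j}|\le r\}$. $\mathrm{HRM}_X(r,m)=\{(p(u_1),\dots,p(u_N)):p\in\mathbb{K}[x_1,\dots,x_m],\deg p\le r\}\subseteq\mathbb{K}^N$ where $u_1,\dots,u_N$ are the points of $X$ in the given order; a generator matrix is a matrix whose rows form a basis of the code. *)

theory Defs
  imports "Jordan_Normal_Form.Matrix"
begin

(* K is a subfield of the field 'l (= the big field L) *)
definition is_subfield :: "'l::field set \<Rightarrow> bool" where
  "is_subfield K \<longleftrightarrow> 0 \<in> K \<and> 1 \<in> K \<and>
     (\<forall>x\<in>K. \<forall>y\<in>K. x + y \<in> K \<and> x - y \<in> K \<and> x * y \<in> K) \<and>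
     (\<forall>x\<in>K. inverse x \<in> K)"

definition Gal :: "'l::field set \<Rightarrow> ('l \<Rightarrow> 'l) set" where
  "Gal K = {\<sigma>. bij \<sigma> \<and> (\<forall>x y. \<sigma> (x + y) = \<sigma> x + \<sigma> y) \<and>
                 (\<forall>x y. \<sigma> (x * y) = \<sigma> x * \<sigma> y) \<and> (\<forall>x\<in>K. \<sigma> x = x)}"

definition is_K_basis :: "'l::field set \<Rightarrow> nat \<Rightarrow> (nat \<Rightarrow> 'l) \<Rightarrow> bool" where
  "is_K_basis K N b \<longleftrightarrow>
     (\<forall>c. (\<forall>t<N. c t \<in> K) \<longrightarrow> (\<Sum>t<N. c t * b t) = 0 \<longrightarrow> (\<forall>t<N. c t = 0)) \<and>
     (\<forall>x. \<exists>c. (\<forall>t<N. c t \<in> K) \<and> x = (\<Sum>t<N. c t * b t))"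

definition galois_ext_of_degree :: "'l::field set \<Rightarrow> nat \<Rightarrow> bool" where
  "galois_ext_of_degree K N \<longleftrightarrow> is_subfield K \<and> (\<exists>b. is_K_basis K N b) \<and>
     finite (Gal K) \<and> card (Gal K) = N"

definition primitive_root :: "nat \<Rightarrow> 'a::field \<Rightarrow> bool" where
  "primitive_root n z \<longleftrightarrow> z ^ n = 1 \<and> (\<forall>k. 0 < k \<and> k < n \<longrightarrow> z ^ k \<noteq> 1)"

(* Delta(n)^m, multi-indices as lists of length m (entry k is index k+1 of the paper) *)
definition Delta :: "nat \<Rightarrow> nat \<Rightarrow> nat list set" where
  "Delta n m = {i. length i = m \<and> (\<forall>k<m. i ! k < n)}"

definition thpow :: "(nat \<Rightarrow> 'l \<Rightarrow> 'l) \<Rightarrow> nat list \<Rightarrow> 'l \<Rightarrow> 'l" where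
  "thpow th i = foldr (\<circ>) (map (\<lambda>k. th k ^^ (i ! k)) [0..<length i]) id"

(* alpha^i = prod_k alpha_k^{i_k};  also x^j evaluated at a point u *)
definition mono :: "(nat \<Rightarrow> 'a::comm_ring_1) \<Rightarrow> nat list \<Rightarrow> 'a" where
  "mono u j = (\<Prod>k<length j. u k ^ (j ! k))"

definition revlex_less :: "nat list \<Rightarrow> nat list \<Rightarrow> bool" where
  "revlex_less i i' \<longleftrightarrow> (\<exists>k<length i. i ! k < i' ! k \<and>
       (\<forall>l. k < l \<and> l < length i \<longrightarrow> i ! l = i' ! l))"

(* the enumeration i^(1),...,i^(N) of Delta(n)^m in reverse lex order (0-based: t < N) *)
definition revlex_enum :: "nat \<Rightarrow> nat \<Rightarrow> nat \<Rightarrow> nat list" where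
  "revlex_enum n m = (THE f. (\<forall>t. t \<ge> n ^ m \<longrightarrow> f t = []) \<and>
      bij_betw f {0..<n ^ m} (Delta n m) \<and>
      (\<forall>s t. s < t \<and> t < n ^ m \<longrightarrow> revlex_less (f s) (f t)))"

definition Bm :: "nat \<Rightarrow> nat \<Rightarrow> (nat \<Rightarrow> 'l::field) \<Rightarrow> nat \<Rightarrow> 'l" where
  "Bm n m alpha t = mono alpha (revlex_enum n m t)"

(* the point zeta^{i^(t)} of U_n^m (coordinate k given as function value at k) *)
definition Xpt :: "nat \<Rightarrow> nat \<Rightarrow> 'l::field \<Rightarrow> nat \<Rightarrow> nat \<Rightarrow> 'l" where
  "Xpt n m z t k = z ^ (revlex_enum n m t ! k)"

definition DiagM :: "nat \<Rightarrow> (nat \<Rightarrow> 'a::zero) \<Rightarrow> 'a mat" where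
  "DiagM N b = mat N N (\<lambda>(i, j). if i = j then b i else 0)"

(* group algebra L[G]: coefficient functions G -> L (supported on G);
   ev_b(P) = (P(b_1),...,P(b_N)) with P(x) = sum_g P_g g(x) *)
definition ev :: "('l \<Rightarrow> 'l) set \<Rightarrow> nat \<Rightarrow> (nat \<Rightarrow> 'l::field) \<Rightarrow> (('l \<Rightarrow> 'l) \<Rightarrow> 'l) \<Rightarrow> 'l vec" where
  "ev G N b P = vec N (\<lambda>t. \<Sum>g\<in>G. P g * g (b t))"

(* the element theta^j of L[G] *)
definition delta :: "('l \<Rightarrow> 'l) \<Rightarrow> ('l \<Rightarrow> 'l) \<Rightarrow> 'l::field" where
  "delta g = (\<lambda>h. if h = g then 1 else 0)"

definition RM_theta :: "(nat \<Rightarrow> 'l \<Rightarrow> 'l) \<Rightarrow> nat \<Rightarrow> nat \<Rightarrow> nat \<Rightarrow> (('l \<Rightarrow> 'l) \<Rightarrow> 'l::field) set" where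
  "RM_theta th n m r = {P. \<exists>c. P = (\<lambda>g. \<Sum>j\<in>{j\<in>Delta n m. sum_list j \<le> r}. c j * delta (thpow th j) g)}"

(* HRM_X(r,m): evaluations at X of polynomials in K[x_1..x_m] of degree <= r;
   a polynomial is given by its coefficients c e in K on monomials x^e, |e| <= r *)
definition HRM :: "'l::field set \<Rightarrow> nat \<Rightarrow> (nat \<Rightarrow> nat \<Rightarrow> 'l) \<Rightarrow> nat \<Rightarrow> nat \<Rightarrow> 'l vec set" where
  "HRM K N X r m = {vec N (\<lambda>t. \<Sum>e\<in>{e. length e = m \<and> sum_list e \<le> r}. c e * mono (X t) e) | c.
       \<forall>e. c e \<in> K}"

definition row_span :: "'a::field set \<Rightarrow> 'a mat \<Rightarrow> 'a vec set" where
  "row_span F Y = {vec (dim_col Y) (\<lambda>t. \<Sum>i<dim_row Y. c i * Y $$ (i, t)) | c.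
       \<forall>i<dim_row Y. c i \<in> F}"

definition rows_indep :: "'a::field set \<Rightarrow> 'a mat \<Rightarrow> bool" where
  "rows_indep F Y \<longleftrightarrow> (\<forall>c. (\<forall>i<dim_row Y. c i \<in> F) \<longrightarrow>
      (\<forall>t<dim_col Y. (\<Sum>i<dim_row Y. c i * Y $$ (i, t)) = 0) \<longrightarrow> (\<forall>i<dim_row Y. c i = 0))"

definition gen_matrix :: "'a::field set \<Rightarrow> 'a vec set \<Rightarrow> 'a mat \<Rightarrow> bool" where
  "gen_matrix F C Y \<longleftrightarrow> rows_indep F Y \<and> row_span F Y = C"

end

theory Submission
  imports Defs "Jordan_Normal_Form.VS_Connect" "HOL-Algebra.Embedded_Algebras"
begin

text \<open>Each monomial \<open>\<alpha>\<^sup>i\<close> is a common eigenvector of the \<open>\<theta>\<^sub>k\<close>, with eigenvalue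
  \<open>\<zeta>\<^bsup>i\<^sub>k\<^esup>\<close> for \<open>\<theta>\<^sub>k\<close>. The \<open>N\<close> monomials have pairwise distinct eigenvalue tuples, hence are
  \<open>\<bbbK>\<close>-linearly independent, hence a basis since \<open>[\<bbbL>:\<bbbK>] = N\<close>. On this basis
  \<open>\<theta>\<^sup>j\<close> acts diagonally by the scalars \<open>x\<^sup>j(\<zeta>\<^sup>i)\<close>, which is the evaluation formula.
  A vanishing combination of rows of \<open>Y\<^sub>r\<^sub>,\<^sub>m\<close> would give an \<open>\<bbbL>\<close>-combination of the
  distinct automorphisms \<open>\<theta>\<^sup>j\<close> vanishing on the basis, contradicting Dedekind's lemma.
  Finally every monomial of degree \<open>\<le> r\<close> agrees on \<open>U\<^sub>n\<^sup>m\<close> with the monomial whose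
  exponents are reduced mod \<open>n\<close>, which lies in \<open>\<Delta>(n)\<^sup>m\<close> and has no larger degree.\<close>

section \<open>Subfields and their automorphisms\<close>

context
  fixes K :: "'l::field set"
  assumes K: "is_subfield K"
begin

lemma subfield_zero: "0 \<in> K"
  using K by (simp add: is_subfield_def)

lemma subfield_one: "1 \<in> K"
  using K by (simp add: is_subfield_def)

lemma subfield_add: "x \<in> K \<Longrightarrow> y \<in> K \<Longrightarrow> x + y \<in> K"
  using K by (simp add: is_subfield_def)

lemma subfield_diff: "x \<in> K \<Longrightarrow> y \<in> K \<Longrightarrow> x - y \<in> K"
  using K by (simp add: is_subfield_def)

lemma subfield_mult: "x \<in> K \<Longrightarrow> y \<in> K \<Longrightarrow> x * y \<in> K"
  using K by (simp add: is_subfield_def)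

lemma subfield_power: "x \<in> K \<Longrightarrow> x ^ k \<in> K"
  by (induction k) (simp_all add: subfield_one subfield_mult)

lemma subfield_sum: "(\<And>a. a \<in> A \<Longrightarrow> f a \<in> K) \<Longrightarrow> sum f A \<in> K"
  by (induction A rule: infinite_finite_induct) (simp_all add: subfield_zero subfield_add)

end

lemma Gal_field_hom:
  assumes "\<sigma> \<in> Gal K"
  shows "field_hom \<sigma>"
proof -
  have add: "\<sigma> (x + y) = \<sigma> x + \<sigma> y" and mult: "\<sigma> (x * y) = \<sigma> x * \<sigma> y" for x y
    using assms by (simp_all add: Gal_def)
  have zero: "\<sigma> 0 = 0" using add[of 0 0] by (metis add.right_neutral add_left_cancel)
  have "surj \<sigma>" using assms by (simp add: Gal_def bij_is_surj)
  then obtain u where "\<sigma> u = 1" by (metis surjD)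
  then have one: "\<sigma> 1 = 1" using mult[of 1 u] by simp
  show ?thesis by unfold_locales (simp_all add: zero one add mult)
qed

lemma Gal_hom:
  assumes "\<sigma> \<in> Gal K"
  shows Gal_mult: "\<sigma> (x * y) = \<sigma> x * \<sigma> y"
    and Gal_sum: "\<sigma> (sum f A) = (\<Sum>a\<in>A. \<sigma> (f a))"
    and Gal_prod: "\<sigma> (prod f A) = (\<Prod>a\<in>A. \<sigma> (f a))"
    and Gal_power: "\<sigma> (x ^ e) = \<sigma> x ^ e"
    and Gal_zero: "\<sigma> 0 = 0"
    and Gal_one: "\<sigma> 1 = 1"
proof -
  interpret field_hom \<sigma> using assms by (rule Gal_field_hom)
  show "\<sigma> (x * y) = \<sigma> x * \<sigma> y" "\<sigma> (sum f A) = (\<Sum>a\<in>A. \<sigma> (f a))"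
    "\<sigma> (prod f A) = (\<Prod>a\<in>A. \<sigma> (f a))" "\<sigma> (x ^ e) = \<sigma> x ^ e" "\<sigma> 0 = 0" "\<sigma> 1 = 1"
    by (simp_all add: hom_distribs)
qed

lemma Gal_fixes: "\<sigma> \<in> Gal K \<Longrightarrow> c \<in> K \<Longrightarrow> \<sigma> c = c"
  by (simp add: Gal_def)

lemma Gal_scalar: "\<sigma> \<in> Gal K \<Longrightarrow> c \<in> K \<Longrightarrow> \<sigma> (c * y) = c * \<sigma> y"
  by (simp add: Gal_mult Gal_fixes)

lemma Dedekind_independence:
  assumes "finite S" "inj_on \<sigma> S" "\<forall>a\<in>S. \<sigma> a \<in> Gal K"
    and "\<forall>x. (\<Sum>a\<in>S. c a * \<sigma> a x) = 0"
  shows "\<forall>a\<in>S. c a = 0"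
  using assms
proof (induction S arbitrary: c rule: finite_induct)
  case (insert a S)
  have Gal: "\<sigma> s \<in> Gal K" if "s \<in> insert a S" for s
    using insert.prems(2) that by blast
  have vanish: "(\<Sum>s\<in>insert a S. c s * \<sigma> s x) = 0" for x
    using insert.prems(3) by blast
  have shifted: "\<forall>s\<in>S. c s * (\<sigma> s y - \<sigma> a y) = 0" for y
  proof (rule insert.IH)
    show "inj_on \<sigma> S" "\<forall>s\<in>S. \<sigma> s \<in> Gal K" using insert.prems(1,2) by (auto intro: inj_on_subset)
    show "\<forall>x. (\<Sum>s\<in>S. c s * (\<sigma> s y - \<sigma> a y) * \<sigma> s x) = 0"
    proof
      fix x
      \<comment> \<open>compare the relation at \<open>y * x\<close> with \<open>\<sigma>\<^sub>a y\<close> times the relation at \<open>x\<close>\<close>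
      have "(\<Sum>s\<in>insert a S. c s * (\<sigma> s y - \<sigma> a y) * \<sigma> s x)
          = (\<Sum>s\<in>insert a S. c s * \<sigma> s (y * x)) - \<sigma> a y * (\<Sum>s\<in>insert a S. c s * \<sigma> s x)"
        by (simp add: Gal_mult[OF Gal] sum_subtractf sum_distrib_left algebra_simps)
      also have "\<dots> = 0" using vanish by simp
      finally show "(\<Sum>s\<in>S. c s * (\<sigma> s y - \<sigma> a y) * \<sigma> s x) = 0"
        using insert.hyps by simp
    qed
  qed
  have "c s = 0" if s: "s \<in> S" for s
  proof -
    have "\<sigma> s \<noteq> \<sigma> a" using insert.prems(1) insert.hyps(2) s by (auto simp: inj_on_def)
    then obtain y where "\<sigma> s y \<noteq> \<sigma> a y" by auto
    then show "c s = 0" using shifted[of y] s by auto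
  qed
  moreover have "c a * \<sigma> a 1 = 0"
    using vanish[of 1] calculation insert.hyps by simp
  ultimately show ?case using Gal_one[OF Gal] by simp
qed simp

lemma Gal_combination_eq_0_on_basis:
  assumes b: "is_K_basis K N b" and Gal: "\<forall>a\<in>S. \<sigma> a \<in> Gal K"
    and vanish: "\<forall>t<N. (\<Sum>a\<in>S. c a * \<sigma> a (b t)) = 0"
  shows "(\<Sum>a\<in>S. c a * \<sigma> a x) = 0"
proof -
  obtain d where d: "\<forall>t<N. d t \<in> K" and x: "x = (\<Sum>t<N. d t * b t)"
    using b unfolding is_K_basis_def by blast
  have "\<sigma> a x = (\<Sum>t<N. d t * \<sigma> a (b t))" if "a \<in> S" for a
    unfolding x Gal_sum[OF Gal[rule_format, OF that]]
    using d by (intro sum.cong) (simp_all add: Gal_scalar[OF Gal[rule_format, OF that]])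
  then have "(\<Sum>a\<in>S. c a * \<sigma> a x) = (\<Sum>a\<in>S. \<Sum>t<N. c a * (d t * \<sigma> a (b t)))"
    by (simp add: sum_distrib_left)
  also have "\<dots> = (\<Sum>t<N. d t * (\<Sum>a\<in>S. c a * \<sigma> a (b t)))"
    by (subst sum.swap) (simp add: sum_distrib_left algebra_simps)
  also have "\<dots> = 0" using vanish by simp
  finally show ?thesis .
qed

lemma common_eigenvectors_independent:
  assumes K: "is_subfield K" and "finite S"
    and Gal: "\<forall>k<m. \<sigma> k \<in> Gal K"
    and eigen: "\<forall>t\<in>S. \<forall>k<m. \<chi> t k \<in> K \<and> \<sigma> k (v t) = \<chi> t k * v t"
    and nonzero: "\<forall>t\<in>S. v t \<noteq> 0"
    and distinct: "\<forall>s\<in>S. \<forall>t\<in>S. s \<noteq> t \<longrightarrow> (\<exists>k<m. \<chi> s k \<noteq> \<chi> t k)"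
    and "\<forall>t\<in>S. c t \<in> K" and "(\<Sum>t\<in>S. c t * v t) = 0"
  shows "\<forall>t\<in>S. c t = 0"
  using assms(2,4-)
proof (induction S arbitrary: c rule: finite_induct)
  case (insert a S)
  have shifted: "\<forall>t\<in>S. c t * (\<chi> t k - \<chi> a k) = 0" if k: "k < m" for k
  proof (rule insert.IH)
    show "\<forall>t\<in>S. c t * (\<chi> t k - \<chi> a k) \<in> K"
      using insert.prems(1,4) k by (simp add: subfield_mult[OF K] subfield_diff[OF K])
    \<comment> \<open>apply \<open>\<sigma>\<^sub>k\<close> to the relation and subtract \<open>\<chi>\<^sub>a\<^sub>k\<close> times it\<close>
    have "c t \<in> K" "\<sigma> k (v t) = \<chi> t k * v t" if "t \<in> insert a S" for t
      using insert.prems(1,4) k that by auto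
    then have "\<sigma> k (\<Sum>t\<in>insert a S. c t * v t) = (\<Sum>t\<in>insert a S. c t * (\<chi> t k * v t))"
      unfolding Gal_sum[OF Gal[rule_format, OF k]]
      by (intro sum.cong) (simp_all add: Gal_scalar[OF Gal[rule_format, OF k]])
    then have image: "(\<Sum>t\<in>insert a S. c t * (\<chi> t k * v t)) = 0"
      using insert.prems(5) Gal_zero[OF Gal[rule_format, OF k]] by simp
    have "(\<Sum>t\<in>insert a S. c t * (\<chi> t k - \<chi> a k) * v t)
        = (\<Sum>t\<in>insert a S. c t * (\<chi> t k * v t)) - \<chi> a k * (\<Sum>t\<in>insert a S. c t * v t)"
      by (simp add: sum_subtractf sum_distrib_left algebra_simps)
    then show "(\<Sum>t\<in>S. c t * (\<chi> t k - \<chi> a k) * v t) = 0"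
      using image insert.prems(5) insert.hyps by simp
  qed (use insert.prems in auto)
  have "c t = 0" if t: "t \<in> S" for t
  proof -
    have "t \<noteq> a" using insert.hyps(2) t by auto
    then obtain k where "k < m" "\<chi> t k \<noteq> \<chi> a k" using insert.prems(3) t by blast
    then show ?thesis using shifted t by auto
  qed
  moreover have "c a * v a = 0" using insert.prems(5) insert.hyps calculation by simp
  ultimately show ?case using insert.prems(2) by simp
qed simp

section \<open>Dimension counting\<close>

text \<open>The exchange lemma is taken from \<open>Embedded_Algebras\<close>, whose dimension theory over a
  subfield \<open>K\<close> applies to the field type seen as the ring \<open>class_ring\<close>.\<close>

lemma subfield_class_ring:
  assumes "is_subfield K"
  shows "subfield K (class_ring :: 'l::field ring)"
proof (rule field.subfieldI'[OF class_field ring.subringI[OF class_field.is_ring]])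
  show "\<And>k. k \<in> K - {\<zero>\<^bsub>class_ring\<^esub>} \<Longrightarrow> inv\<^bsub>class_ring\<^esub> k \<in> K"
    using assms by (auto simp: is_subfield_def class_ring_simps)
qed (use assms in \<open>auto simp: is_subfield_def class_ring_simps\<close>)

lemma class_ring_combine_eq_sum:
  "ring.combine (class_ring :: 'a::field ring) Ks Us = (\<Sum>i<min (length Ks) (length Us). Ks ! i * Us ! i)"
proof (induction Us arbitrary: Ks)
  case (Cons u Us)
  then show ?case
    by (cases Ks) (simp_all add: ring.combine.simps[OF class_field.is_ring]
        lessThan_Suc_eq_insert_0 sum.reindex del: sum.lessThan_Suc)
qed (simp add: ring.combine.simps[OF class_field.is_ring])

lemma class_ring_Span_iff:
  assumes "is_subfield K"
  shows "x \<in> ring.Span class_ring K (map b [0..<N]) \<longleftrightarrow>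
    (\<exists>c. (\<forall>t<N. c t \<in> K) \<and> x = (\<Sum>t<N. c t * b t))"
proof -
  have "x \<in> ring.Span class_ring K (map b [0..<N]) \<longleftrightarrow>
      (\<exists>Ks. set Ks \<subseteq> K \<and> length Ks = N \<and> x = ring.combine class_ring Ks (map b [0..<N]))"
    using ring.Span_mem_iff_length_version[OF class_field.is_ring subfield_class_ring[OF assms]]
    by simp
  also have "\<dots> \<longleftrightarrow> (\<exists>c. (\<forall>t<N. c t \<in> K) \<and> x = (\<Sum>t<N. c t * b t))"
  proof
    assume "\<exists>Ks. set Ks \<subseteq> K \<and> length Ks = N \<and> x = ring.combine class_ring Ks (map b [0..<N])"
    then obtain Ks where "set Ks \<subseteq> K" "length Ks = N" "x = ring.combine class_ring Ks (map b [0..<N])"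
      by blast
    then show "\<exists>c. (\<forall>t<N. c t \<in> K) \<and> x = (\<Sum>t<N. c t * b t)"
      by (intro exI[of _ "(!) Ks"]) (auto simp: class_ring_combine_eq_sum)
  next
    assume "\<exists>c. (\<forall>t<N. c t \<in> K) \<and> x = (\<Sum>t<N. c t * b t)"
    then obtain c where "\<forall>t<N. c t \<in> K" "x = (\<Sum>t<N. c t * b t)" by blast
    then show "\<exists>Ks. set Ks \<subseteq> K \<and> length Ks = N \<and> x = ring.combine class_ring Ks (map b [0..<N])"
      by (intro exI[of _ "map c [0..<N]"]) (auto simp: class_ring_combine_eq_sum)
  qed
  finally show ?thesis .
qed

lemma class_ring_independent_iff:
  assumes "is_subfield K"
  shows "ring.independent class_ring K (map b [0..<N]) \<longleftrightarrow>
    (\<forall>c. (\<forall>t<N. c t \<in> K) \<longrightarrow> (\<Sum>t<N. c t * b t) = 0 \<longrightarrow> (\<forall>t<N. c t = 0))"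
proof
  note Kf = subfield_class_ring[OF assms]
  show "\<forall>c. (\<forall>t<N. c t \<in> K) \<longrightarrow> (\<Sum>t<N. c t * b t) = 0 \<longrightarrow> (\<forall>t<N. c t = 0)"
    if indep: "ring.independent class_ring K (map b [0..<N])"
  proof (intro allI impI)
    fix c t assume c: "\<forall>t<N. c t \<in> K" "(\<Sum>t<N. c t * b t) = 0" and t: "t < N"
    have "set (map c [0..<N]) \<subseteq> K" using c(1) by auto
    then have "set (take N (map c [0..<N])) \<subseteq> {0}"
      using ring.independent_imp_trivial_combine[OF class_field.is_ring Kf indep, of "map c [0..<N]"] c(2)
      by (simp add: class_ring_combine_eq_sum)
    then show "c t = 0" using t by (auto simp: image_subset_iff)
  qed
  assume triv: "\<forall>c. (\<forall>t<N. c t \<in> K) \<longrightarrow> (\<Sum>t<N. c t * b t) = 0 \<longrightarrow> (\<forall>t<N. c t = 0)"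
  show "ring.independent class_ring K (map b [0..<N])"
  proof (rule ring.trivial_combine_imp_independent[OF class_field.is_ring Kf])
    fix Ks assume Ks: "set Ks \<subseteq> K" "ring.combine class_ring Ks (map b [0..<N]) = \<zero>\<^bsub>class_ring\<^esub>"
    define c where "c t = (if t < length Ks then Ks ! t else 0)" for t
    have "(\<Sum>t<N. c t * b t) = (\<Sum>t<min (length Ks) N. Ks ! t * b t)"
      by (rule sum.mono_neutral_cong_right) (auto simp: c_def)
    then have "(\<Sum>t<N. c t * b t) = 0"
      using Ks(2) by (simp add: class_ring_combine_eq_sum)
    moreover have "\<forall>t<N. c t \<in> K"
      using Ks(1) assms by (auto simp: c_def is_subfield_def)
    ultimately have "\<forall>t<N. c t = 0" using triv by blast
    then have "\<forall>t<min (length Ks) N. Ks ! t = 0" by (metis c_def min_less_iff_conj)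
    then show "set (take (length (map b [0..<N])) Ks) \<subseteq> {\<zero>\<^bsub>class_ring\<^esub>}"
      by (auto simp: in_set_conv_nth)
  qed simp
qed

lemma is_K_basis_of_independent:
  assumes K: "is_subfield K" and b: "is_K_basis K N b"
    and indep: "\<forall>c. (\<forall>t<N. c t \<in> K) \<longrightarrow> (\<Sum>t<N. c t * v t) = 0 \<longrightarrow> (\<forall>t<N. c t = 0)"
  shows "is_K_basis K N v"
proof -
  note Kf = subfield_class_ring[OF K]
  have "ring.independent class_ring K (map b [0..<N])"
    using b class_ring_independent_iff[OF K] unfolding is_K_basis_def by blast
  moreover have "ring.Span class_ring K (map b [0..<N]) = UNIV"
    using b class_ring_Span_iff[OF K, of _ b N] unfolding is_K_basis_def by blast
  ultimately have dim: "ring.dimension class_ring N K UNIV"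
    using ring.dimensionI[OF class_field.is_ring Kf] by fastforce
  have "ring.independent class_ring K (map v [0..<N])"
    using indep class_ring_independent_iff[OF K] by blast
  then have "ring.Span class_ring K (map v [0..<N]) = UNIV"
    using ring.independent_length_eq_dimension[OF class_field.is_ring Kf dim, of "map v [0..<N]"]
    by simp
  then show ?thesis
    using class_ring_Span_iff[OF K, of _ v N] indep unfolding is_K_basis_def by blast
qed

section \<open>Reverse lexicographic enumeration\<close>

lemma Delta_eq_lists: "Delta n m = {xs. set xs \<subseteq> {..<n} \<and> length xs = m}"
  by (auto simp: Delta_def in_set_conv_nth subset_iff)

lemma finite_Delta: "finite (Delta n m)"
  by (simp add: Delta_eq_lists finite_lists_length_eq)

lemma card_Delta: "card (Delta n m) = n ^ m"
  by (simp add: Delta_eq_lists card_lists_length_eq)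

lemma revlex_less_irrefl: "\<not> revlex_less i i"
  unfolding revlex_less_def by auto

lemma revlex_less_trans:
  assumes "length i' = length i" "length i'' = length i"
    and "revlex_less i i'" "revlex_less i' i''"
  shows "revlex_less i i''"
proof -
  obtain k where k: "k < length i" "i ! k < i' ! k" "\<forall>l. k < l \<and> l < length i \<longrightarrow> i ! l = i' ! l"
    using assms(3) unfolding revlex_less_def by blast
  obtain k' where k': "k' < length i" "i' ! k' < i'' ! k'"
      "\<forall>l. k' < l \<and> l < length i \<longrightarrow> i' ! l = i'' ! l"
    using assms(1,4) unfolding revlex_less_def by auto
  have "i ! max k k' < i'' ! max k k'"
    using k k' by (cases k k' rule: linorder_cases) auto
  moreover have "\<forall>l. max k k' < l \<and> l < length i \<longrightarrow> i ! l = i'' ! l"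
    using k k' by auto
  ultimately show ?thesis
    using k(1) k'(1) unfolding revlex_less_def by (intro exI[of _ "max k k'"]) simp
qed

lemma revlex_less_total:
  assumes "length i' = length i" "i \<noteq> i'"
  shows "revlex_less i i' \<or> revlex_less i' i"
proof -
  define D where "D = {k. k < length i \<and> i ! k \<noteq> i' ! k}"
  have "D \<noteq> {}"
    using assms nth_equalityI[of i i'] by (auto simp: D_def)
  moreover have fin: "finite D" by (simp add: D_def)
  ultimately have k: "Max D < length i" "i ! Max D \<noteq> i' ! Max D"
    using Max_in[of D] by (auto simp: D_def)
  have above: "i ! l = i' ! l" if "Max D < l" "l < length i" for l
  proof (rule ccontr)
    assume "i ! l \<noteq> i' ! l"
    then have "l \<le> Max D" using fin that(2) by (simp add: D_def)
    then show False using that(1) by simp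
  qed
  show ?thesis
  proof (cases "i ! Max D < i' ! Max D")
    case True
    then show ?thesis using k above unfolding revlex_less_def by (intro disjI1 exI[of _ "Max D"]) simp
  next
    case False
    then have "i' ! Max D < i ! Max D" using k(2) by simp
    then show ?thesis
      using k above assms(1) unfolding revlex_less_def by (intro disjI2 exI[of _ "Max D"]) simp
  qed
qed

definition order_rank :: "'a set \<Rightarrow> ('a \<Rightarrow> 'a \<Rightarrow> bool) \<Rightarrow> 'a \<Rightarrow> nat" where
  "order_rank A R a = card {x\<in>A. R x a}"

context
  fixes A :: "'a set" and R :: "'a \<Rightarrow> 'a \<Rightarrow> bool"
  assumes fin: "finite A" and irrefl: "irreflp_on A R" and trans: "transp_on A R"
    and total: "totalp_on A R"
begin

lemma order_rank_less:
  assumes "x \<in> A" "y \<in> A" "R x y"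
  shows "order_rank A R x < order_rank A R y"
proof -
  have "{w\<in>A. R w x} \<subseteq> {w\<in>A. R w y}"
    by (auto intro: transp_onD[OF trans _ assms(1,2) _ assms(3)])
  moreover have "x \<in> {w\<in>A. R w y} - {w\<in>A. R w x}"
    using assms irreflp_onD[OF irrefl] by simp
  ultimately have "{w\<in>A. R w x} \<subset> {w\<in>A. R w y}" by blast
  then show ?thesis unfolding order_rank_def using fin by (simp add: psubset_card_mono)
qed

lemma inj_on_order_rank: "inj_on (order_rank A R) A"
proof (rule inj_onI, rule ccontr)
  fix x y assume "x \<in> A" "y \<in> A" "order_rank A R x = order_rank A R y" "x \<noteq> y"
  then show False using totalp_onD[OF total] order_rank_less by (metis less_irrefl)
qed

lemma bij_betw_order_rank: "bij_betw (order_rank A R) A {0..<card A}"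
proof -
  have "order_rank A R x < card A" if "x \<in> A" for x
  proof -
    have "{w\<in>A. R w x} \<subset> A" using that irreflp_onD[OF irrefl] by blast
    then show ?thesis unfolding order_rank_def using fin by (simp add: psubset_card_mono)
  qed
  then have "order_rank A R ` A = {0..<card A}"
    using inj_on_order_rank fin by (intro card_subset_eq) (auto simp: card_image)
  then show ?thesis using inj_on_order_rank by (simp add: bij_betw_def)
qed

lemma order_rank_increasing_enumeration:
  assumes f: "bij_betw f {0..<card A} A"
    and increasing: "\<forall>s t. s < t \<and> t < card A \<longrightarrow> R (f s) (f t)"
    and t: "t < card A"
  shows "order_rank A R (f t) = t"
proof -
  have "{x\<in>A. R x (f t)} = f ` {0..<t}"
  proof (intro equalityI subsetI)
    fix x assume x: "x \<in> {x\<in>A. R x (f t)}"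
    then have "x \<in> f ` {0..<card A}" using f by (simp add: bij_betw_def)
    then obtain s where s: "s < card A" "x = f s" by auto
    have "s < t"
    proof (rule ccontr)
      assume "\<not> s < t"
      then have "f t = x \<or> R (f t) x" using increasing s by (cases "s = t") auto
      moreover have "f t \<in> A" using f t by (auto simp: bij_betw_def)
      ultimately show False
        using x irreflp_onD[OF irrefl] transp_onD[OF trans, of "f t" x "f t"] by auto
    qed
    then show "x \<in> f ` {0..<t}" using s by simp
  next
    fix x assume "x \<in> f ` {0..<t}"
    then show "x \<in> {x\<in>A. R x (f t)}" using f t increasing by (auto simp: bij_betw_def)
  qed
  moreover have "inj_on f {0..<t}"
    using f t by (auto simp: bij_betw_def intro: inj_on_subset)
  ultimately show ?thesis unfolding order_rank_def by (simp add: card_image)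
qed

lemma ex1_increasing_enumeration:
  "\<exists>!f. (\<forall>t. t \<ge> card A \<longrightarrow> f t = d) \<and> bij_betw f {0..<card A} A \<and>
    (\<forall>s t. s < t \<and> t < card A \<longrightarrow> R (f s) (f t))"
proof -
  define f where "f t = (if t < card A then inv_into A (order_rank A R) t else d)" for t
  have f_bij: "bij_betw f {0..<card A} A"
    using bij_betw_inv_into[OF bij_betw_order_rank]
    by (rule bij_betw_cong[THEN iffD1, rotated]) (simp add: f_def)
  have f_rank: "order_rank A R (f t) = t" if "t < card A" for t
    using that bij_betw_order_rank by (simp add: f_def bij_betw_def f_inv_into_f)
  have f_increasing: "R (f s) (f t)" if "s < t" "t < card A" for s t
  proof -
    have fA: "f s \<in> A" "f t \<in> A" using f_bij that by (auto simp: bij_betw_def)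
    moreover have "f s \<noteq> f t" using f_rank[of s] f_rank[of t] that by auto
    moreover have "\<not> R (f t) (f s)"
      using order_rank_less[OF fA(2,1)] f_rank[of s] f_rank[of t] that by auto
    ultimately show ?thesis using totalp_onD[OF total] by blast
  qed
  have f_unique: "g = f"
    if "(\<forall>t. t \<ge> card A \<longrightarrow> g t = d) \<and> bij_betw g {0..<card A} A \<and>
      (\<forall>s t. s < t \<and> t < card A \<longrightarrow> R (g s) (g t))" for g
  proof
    fix t show "g t = f t"
    proof (cases "t < card A")
      case True
      have "order_rank A R (g t) = t"
        using order_rank_increasing_enumeration[of g t] that True by blast
      moreover have "g t \<in> A" "f t \<in> A" using that f_bij True by (auto simp: bij_betw_def)
      ultimately show ?thesis using inj_on_order_rank f_rank[OF True] by (metis inj_onD)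
    next
      case False
      then show ?thesis using conjunct1[OF that] by (simp add: f_def)
    qed
  qed
  show ?thesis
  proof (rule ex1I[of _ f])
    show "(\<forall>t. t \<ge> card A \<longrightarrow> f t = d) \<and> bij_betw f {0..<card A} A \<and>
      (\<forall>s t. s < t \<and> t < card A \<longrightarrow> R (f s) (f t))"
      using f_bij f_increasing by (auto simp: f_def simp del: inv_into_into)
  qed (rule f_unique)
qed

end

lemma bij_betw_revlex_enum: "bij_betw (revlex_enum n m) {0..<n ^ m} (Delta n m)"
proof -
  have len: "length x = m" if "x \<in> Delta n m" for x using that by (simp add: Delta_def)
  have irrefl: "irreflp_on (Delta n m) revlex_less"
    by (rule irreflp_onI) (simp add: revlex_less_irrefl)
  have trans: "transp_on (Delta n m) revlex_less"
  proof (rule transp_onI)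
    fix x y w assume "x \<in> Delta n m" "y \<in> Delta n m" "w \<in> Delta n m"
      and "revlex_less x y" "revlex_less y w"
    then show "revlex_less x w" using revlex_less_trans[of y x w] len by simp
  qed
  have total: "totalp_on (Delta n m) revlex_less"
    by (rule totalp_onI) (use revlex_less_total len in simp)
  have "\<exists>!f. (\<forall>t. t \<ge> n ^ m \<longrightarrow> f t = []) \<and> bij_betw f {0..<n ^ m} (Delta n m) \<and>
      (\<forall>s t. s < t \<and> t < n ^ m \<longrightarrow> revlex_less (f s) (f t))"
    using ex1_increasing_enumeration[OF finite_Delta irrefl trans total, where d = "[]"]
    unfolding card_Delta .
  from theI'[OF this] show ?thesis unfolding revlex_enum_def by (elim conjE)
qed

section \<open>Monomials and simultaneous eigenvectors\<close>

lemma mono_mult_point: "mono (\<lambda>k. u k * v k) j = mono u j * mono v j"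
  by (simp add: mono_def power_mult_distrib prod.distrib)

lemma mono_indicator_point:
  assumes "k < length j"
  shows "mono (\<lambda>l. if l = k then w else 1) j = w ^ (j ! k)"
proof -
  have "(if l = k then w else 1) ^ (j ! l) = (if l = k then w ^ (j ! l) else 1)" for l
    by simp
  then show ?thesis using assms by (simp add: mono_def prod.delta)
qed

lemma power_mod_order: "w ^ n = (1::'a::comm_ring_1) \<Longrightarrow> w ^ (a mod n) = w ^ a"
  by (metis div_mult_mod_eq mult.commute mult_1 power_add power_mult power_one)

lemma mono_mod_exponents:
  assumes "\<forall>k<length e. u k ^ n = 1"
  shows "mono u (map (\<lambda>x. x mod n) e) = mono u e"
  unfolding mono_def by (intro prod.cong refl) (auto simp: assms power_mod_order)

lemma finite_exponents_bounded_degree: "finite {e. length e = m \<and> sum_list e \<le> (r::nat)}"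
proof (rule finite_subset)
  show "{e. length e = m \<and> sum_list e \<le> r} \<subseteq> {xs. set xs \<subseteq> {0..r} \<and> length xs = m}"
    by (auto dest: member_le_sum_list)
qed (simp add: finite_lists_length_eq)

lemma mod_exponents_in_Delta:
  assumes "0 < n" "length e = m" "sum_list e \<le> r"
  shows "map (\<lambda>x. x mod n) e \<in> {j\<in>Delta n m. sum_list j \<le> r}"
proof -
  have "sum_list (map (\<lambda>x. x mod n) e) \<le> sum_list (map (\<lambda>x. x) e)"
    by (rule sum_list_mono) simp
  then show ?thesis using assms by (auto simp: Delta_def)
qed

lemma primitive_root_power_inj:
  assumes z: "primitive_root n z" and "a < n" "b < n" "z ^ a = z ^ b"
  shows "a = b"
proof -
  have "z ^ n = 1" using z by (simp add: primitive_root_def)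
  moreover have "0 ^ n \<noteq> (1::'a)" using assms(2) by (simp add: power_0_left)
  ultimately have "z \<noteq> 0" by auto
  have no_gap: "z ^ (b - a) = 1" if "a < b" "z ^ a = z ^ b" for a b :: nat
    using that \<open>z \<noteq> 0\<close> by (metis le_add_diff_inverse less_imp_le mult_cancel_left1 power_add power_not_zero)
  show ?thesis
  proof (rule ccontr)
    assume "a \<noteq> b"
    then obtain a' b' where "a' < b'" "b' < n" "z ^ a' = z ^ b'"
      using assms(2-4) by (metis linorder_neqE_nat)
    then have "z ^ (b' - a') = 1" "0 < b' - a'" "b' - a' < n" using no_gap by auto
    then show False using z by (simp add: primitive_root_def)
  qed
qed

lemma foldr_comp_apply: "foldr (\<circ>) fs id y = foldr (\<lambda>f. f) fs y"
  by (induction fs) auto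

lemma thpow_eigenvector:
  assumes K: "is_subfield K"
    and Gal: "\<forall>k<length j. th k \<in> Gal K" and cK: "\<forall>k<length j. c k \<in> K"
    and eigen: "\<forall>k<length j. th k y = c k * y"
  shows "thpow th j y = mono c j * y"
proof -
  have scalar: "th k (d * x) = d * th k x" if "k < length j" "d \<in> K" for k d x
    using Gal_scalar Gal that by blast
  have iterate: "(th k ^^ a) x = c k ^ a * x" if k: "k < length j" and "th k x = c k * x" for k a x
    using that(2) scalar[OF k subfield_power[OF K cK[rule_format, OF k]]]
    by (induction a) (simp_all add: mult.left_commute)
  have "foldr (\<lambda>f. f) (map (\<lambda>k. th k ^^ (j ! k)) [0..<p]) x = (\<Prod>k<p. c k ^ (j ! k)) * x"
    if "p \<le> length j" "\<forall>k<length j. th k x = c k * x" for p x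
    using that
  proof (induction p arbitrary: x)
    case (Suc p)
    define x' where "x' = c p ^ (j ! p) * x"
    have p: "p < length j" using Suc.prems(1) by simp
    have step: "(th p ^^ (j ! p)) x = x'"
      unfolding x'_def using iterate p Suc.prems(2) by blast
    have "\<forall>k<length j. th k x' = c k * x'"
      unfolding x'_def using Suc.prems(2)
      by (simp add: scalar subfield_power[OF K] cK p mult.left_commute)
    then have "foldr (\<lambda>f. f) (map (\<lambda>k. th k ^^ (j ! k)) [0..<p]) x' = (\<Prod>k<p. c k ^ (j ! k)) * x'"
      using Suc.IH Suc.prems(1) by simp
    then show ?case by (simp add: step x'_def mult_ac)
  qed simp
  from this[of "length j" y] show ?thesis
    using eigen unfolding thpow_def mono_def foldr_comp_apply by simp
qed

lemma sum_delta: "finite G \<Longrightarrow> \<sigma> \<in> G \<Longrightarrow> (\<Sum>g\<in>G. delta \<sigma> g * f g) = f \<sigma>"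
  by (simp add: delta_def if_distrib[of "\<lambda>x. x * _"] cong: if_cong)

lemma ev_delta: "finite G \<Longrightarrow> \<sigma> \<in> G \<Longrightarrow> ev G N b (delta \<sigma>) = vec N (\<lambda>t. \<sigma> (b t))"
  by (simp add: ev_def sum_delta)

lemma ev_sum_delta:
  assumes "finite G" "\<forall>j\<in>J. \<tau> j \<in> G"
  shows "ev G N b (\<lambda>g. \<Sum>j\<in>J. c j * delta (\<tau> j) g) = vec N (\<lambda>t. \<Sum>j\<in>J. c j * \<tau> j (b t))"
proof -
  have "(\<Sum>g\<in>G. (\<Sum>j\<in>J. c j * delta (\<tau> j) g) * g x) = (\<Sum>j\<in>J. c j * \<tau> j x)" for x
  proof -
    have "(\<Sum>g\<in>G. (\<Sum>j\<in>J. c j * delta (\<tau> j) g) * g x)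
        = (\<Sum>g\<in>G. \<Sum>j\<in>J. c j * (delta (\<tau> j) g * g x))"
      by (simp add: sum_distrib_right mult.assoc)
    also have "\<dots> = (\<Sum>j\<in>J. c j * (\<Sum>g\<in>G. delta (\<tau> j) g * g x))"
      by (subst sum.swap) (simp add: sum_distrib_left)
    also have "\<dots> = (\<Sum>j\<in>J. c j * \<tau> j x)"
      using assms by (intro sum.cong refl) (simp add: sum_delta)
    finally show ?thesis .
  qed
  then show ?thesis by (simp add: ev_def)
qed

lemma dim_DiagM [simp]: "dim_row (DiagM N b) = N" "dim_col (DiagM N b) = N"
  by (simp_all add: DiagM_def)

lemma mat_mult_DiagM: "mat k N f * DiagM N b = mat k N (\<lambda>(i, t). f (i, t) * b t)"
proof (rule eq_matI)
  fix i t assume "i < dim_row (mat k N (\<lambda>(i, t). f (i, t) * b t))"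
    "t < dim_col (mat k N (\<lambda>(i, t). f (i, t) * b t))"
  then have it: "i < k" "t < N" by auto
  have "(mat k N f * DiagM N b) $$ (i, t) = (\<Sum>s<N. f (i, s) * (if s = t then b s else 0))"
    using it by (simp add: DiagM_def scalar_prod_def atLeast0LessThan)
  also have "\<dots> = f (i, t) * b t" using it(2) by (simp add: if_distrib cong: if_cong)
  finally show "(mat k N f * DiagM N b) $$ (i, t) = mat k N (\<lambda>(i, t). f (i, t) * b t) $$ (i, t)"
    using it by simp
qed (simp_all add: DiagM_def)

lemma row_span_mat:
  "row_span F (mat k N f) = {vec N (\<lambda>t. \<Sum>i<k. c i * f (i, t)) | c. \<forall>i<k. c i \<in> F}"
proof -
  have "vec N (\<lambda>t. \<Sum>i<k. c i * mat k N f $$ (i, t)) = vec N (\<lambda>t. \<Sum>i<k. c i * f (i, t))" for c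
    by (intro eq_vecI) simp_all
  then show ?thesis by (simp add: row_span_def)
qed

lemma rows_indep_mat:
  "rows_indep F (mat k N f) \<longleftrightarrow>
    (\<forall>c. (\<forall>i<k. c i \<in> F) \<longrightarrow> (\<forall>t<N. (\<Sum>i<k. c i * f (i, t)) = 0) \<longrightarrow> (\<forall>i<k. c i = 0))"
proof -
  have "(\<Sum>i<k. c i * mat k N f $$ (i, t)) = (\<Sum>i<k. c i * f (i, t))" if "t < N" for c t
    using that by (intro sum.cong) simp_all
  then show ?thesis by (simp add: rows_indep_def)
qed

lemma sum_reindex_bij:
  fixes k :: nat
  assumes "bij_betw js {0..<k} J"
  shows "(\<Sum>i<k. g (js i)) = (\<Sum>j\<in>J. g j)"
  using sum.reindex_bij_betw[OF assms, of g] unfolding atLeast0LessThan .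

lemma row_span_reindex:
  assumes js: "bij_betw js {0..<k} J"
  shows "row_span F (mat k N (\<lambda>(a, t). w (js a) t))
    = {vec N (\<lambda>t. \<Sum>j\<in>J. d j * w j t) | d. \<forall>j\<in>J. d j \<in> F}"
  unfolding row_span_mat
proof (intro equalityI subsetI)
  fix v assume "v \<in> {vec N (\<lambda>t. \<Sum>i<k. c i * (case (i, t) of (a, t) \<Rightarrow> w (js a) t)) | c. \<forall>i<k. c i \<in> F}"
  then obtain c where c: "\<forall>i<k. c i \<in> F" "v = vec N (\<lambda>t. \<Sum>i<k. c i * w (js i) t)" by auto
  define d where "d j = c (inv_into {0..<k} js j)" for j
  have "d (js i) = c i" if "i < k" for i
    using bij_betw_inv_into_left[OF js] that by (simp add: d_def)
  then have "(\<Sum>i<k. c i * w (js i) t) = (\<Sum>j\<in>J. d j * w j t)" for t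
    using sum_reindex_bij[OF js, of "\<lambda>j. d j * w j t"] by simp
  then have "v = vec N (\<lambda>t. \<Sum>j\<in>J. d j * w j t)" using c(2) by simp
  moreover have "\<forall>j\<in>J. d j \<in> F"
    using c(1) bij_betwE[OF bij_betw_inv_into[OF js]] by (auto simp: d_def)
  ultimately show "v \<in> {vec N (\<lambda>t. \<Sum>j\<in>J. d j * w j t) | d. \<forall>j\<in>J. d j \<in> F}"
    by blast
next
  fix v assume "v \<in> {vec N (\<lambda>t. \<Sum>j\<in>J. d j * w j t) | d. \<forall>j\<in>J. d j \<in> F}"
  then obtain d where d: "\<forall>j\<in>J. d j \<in> F" "v = vec N (\<lambda>t. \<Sum>j\<in>J. d j * w j t)" by blast
  have "v = vec N (\<lambda>t. \<Sum>i<k. d (js i) * w (js i) t)"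
    using d(2) sum_reindex_bij[OF js, of "\<lambda>j. d j * w j _"] by simp
  moreover have "\<forall>i<k. d (js i) \<in> F" using d(1) bij_betwE[OF js] by auto
  ultimately show "v \<in> {vec N (\<lambda>t. \<Sum>i<k. c i * (case (i, t) of (a, t) \<Rightarrow> w (js a) t)) | c. \<forall>i<k. c i \<in> F}"
    by (intro CollectI exI[of _ "d \<circ> js"]) simp
qed

lemma rows_indep_reindex:
  assumes js: "bij_betw js {0..<k} J"
    and indep: "\<forall>d. (\<forall>j\<in>J. d j \<in> F) \<longrightarrow> (\<forall>t<N. (\<Sum>j\<in>J. d j * w j t) = 0) \<longrightarrow> (\<forall>j\<in>J. d j = 0)"
  shows "rows_indep F (mat k N (\<lambda>(a, t). w (js a) t))"
  unfolding rows_indep_mat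
proof (intro allI impI)
  fix c i assume c: "\<forall>i<k. c i \<in> F"
    and vanish: "\<forall>t<N. (\<Sum>i<k. c i * (case (i, t) of (a, t) \<Rightarrow> w (js a) t)) = 0" and i: "i < k"
  define d where "d j = c (inv_into {0..<k} js j)" for j
  have d_js: "d (js i) = c i" if "i < k" for i
    using bij_betw_inv_into_left[OF js] that by (simp add: d_def)
  then have "(\<Sum>j\<in>J. d j * w j t) = (\<Sum>i<k. c i * w (js i) t)" for t
    using sum_reindex_bij[OF js, of "\<lambda>j. d j * w j t"] by simp
  moreover have "\<forall>j\<in>J. d j \<in> F"
    using c bij_betwE[OF bij_betw_inv_into[OF js]] by (auto simp: d_def)
  ultimately have "\<forall>j\<in>J. d j = 0" using indep vanish by simp
  then show "c i = 0" using d_js[OF i] bij_betwE[OF js] i by auto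
qed

section \<open>The Kummer basis and the two codes\<close>

locale kummer_extension =
  fixes K :: "'l::field set" and n m N :: nat and z :: 'l
    and th :: "nat \<Rightarrow> 'l \<Rightarrow> 'l" and alpha :: "nat \<Rightarrow> 'l"
  assumes n_pos: "0 < n"
    and N_def: "N = n ^ m"
    and gal: "galois_ext_of_degree K N"
    and zK: "z \<in> K" and zprim: "primitive_root n z"
    and thG: "\<forall>k<m. th k \<in> Gal K"
    and bij: "bij_betw (thpow th) (Delta n m) (Gal K)"
    and anz: "\<forall>k<m. alpha k \<noteq> 0"
    and a_fix: "\<forall>k<m. \<forall>l<m. k \<noteq> l \<longrightarrow> th k (alpha l) = alpha l"
    and a_mul: "\<forall>k<m. th k (alpha k) = z * alpha k"
begin

abbreviation "B \<equiv> Bm n m alpha"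
abbreviation "X \<equiv> Xpt n m z"

lemma subfield: "is_subfield K"
  using gal by (simp add: galois_ext_of_degree_def)

lemma finite_Gal: "finite (Gal K)"
  using bij finite_Delta bij_betw_finite by blast

lemma thpow_Gal: "j \<in> Delta n m \<Longrightarrow> thpow th j \<in> Gal K"
  using bij_betwE[OF bij] by blast

lemma revlex_enum_in_Delta: "t < N \<Longrightarrow> revlex_enum n m t \<in> Delta n m"
  using bij_betwE[OF bij_betw_revlex_enum[of n m]] N_def by auto

lemma length_revlex_enum: "t < N \<Longrightarrow> length (revlex_enum n m t) = m"
  using revlex_enum_in_Delta by (simp add: Delta_def)

lemma X_in_K: "X t k \<in> K"
  by (simp add: Xpt_def subfield_power[OF subfield zK])

lemma X_power_n: "X t k ^ n = 1"
  using zprim unfolding Xpt_def primitive_root_def by (metis mult.commute power_mult power_one)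

lemma th_mono_alpha:
  assumes "length i = m" "k < m"
  shows "th k (mono alpha i) = z ^ (i ! k) * mono alpha i"
proof -
  have Gal: "th k \<in> Gal K" using thG assms(2) by simp
  have "th k (alpha l) = (if l = k then z else 1) * alpha l" if "l < m" for l
    using a_fix a_mul assms(2) that by auto
  then have "th k (mono alpha i) = mono (\<lambda>l. (if l = k then z else 1) * alpha l) i"
    unfolding mono_def Gal_prod[OF Gal] Gal_power[OF Gal] using assms(1)
    by (intro prod.cong refl) simp
  also have "\<dots> = z ^ (i ! k) * mono alpha i"
    using assms by (simp add: mono_mult_point mono_indicator_point)
  finally show ?thesis .
qed

lemma th_Bm: "t < N \<Longrightarrow> k < m \<Longrightarrow> th k (B t) = X t k * B t"
  unfolding Bm_def Xpt_def by (simp add: th_mono_alpha length_revlex_enum)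

lemma thpow_Bm:
  assumes "j \<in> Delta n m" "t < N"
  shows "thpow th j (B t) = mono (X t) j * B t"
  using assms by (intro thpow_eigenvector[OF subfield]) (auto simp: Delta_def thG th_Bm X_in_K)

lemma Bm_nonzero: "t < N \<Longrightarrow> B t \<noteq> 0"
  by (simp add: Bm_def mono_def length_revlex_enum anz)

lemma Bm_independent:
  "\<forall>c. (\<forall>t<N. c t \<in> K) \<longrightarrow> (\<Sum>t<N. c t * B t) = 0 \<longrightarrow> (\<forall>t<N. c t = 0)"
proof (rule allI, intro impI)
  fix c assume c: "\<forall>t<N. c t \<in> K" "(\<Sum>t<N. c t * B t) = 0"
  have inj: "inj_on (revlex_enum n m) {0..<N}"
    using bij_betw_revlex_enum by (simp add: N_def bij_betw_def)
  have distinct: "\<exists>k<m. X s k \<noteq> X t k" if st: "s < N" "t < N" "s \<noteq> t" for s t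
  proof -
    let ?i = "revlex_enum n m s" and ?i' = "revlex_enum n m t"
    have "?i \<noteq> ?i'" using inj_onD[OF inj, of s t] st by auto
    then obtain k where k: "k < m" "?i ! k \<noteq> ?i' ! k"
      using nth_equalityI[of ?i ?i'] length_revlex_enum st by auto
    moreover have "?i ! k < n" "?i' ! k < n"
      using revlex_enum_in_Delta st k(1) by (auto simp: Delta_def)
    ultimately have "X s k \<noteq> X t k"
      using primitive_root_power_inj[OF zprim, of "?i ! k" "?i' ! k"] unfolding Xpt_def by blast
    then show ?thesis using k(1) by blast
  qed
  have "\<forall>t\<in>{..<N}. c t = 0"
  proof (rule common_eigenvectors_independent[OF subfield finite_lessThan thG])
    show "\<forall>t\<in>{..<N}. \<forall>k<m. X t k \<in> K \<and> th k (B t) = X t k * B t"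
      by (simp add: th_Bm X_in_K)
    show "\<forall>t\<in>{..<N}. B t \<noteq> 0" by (simp add: Bm_nonzero)
    show "\<forall>s\<in>{..<N}. \<forall>t\<in>{..<N}. s \<noteq> t \<longrightarrow> (\<exists>k<m. X s k \<noteq> X t k)"
      using distinct by simp
  qed (use c in simp_all)
  then show "\<forall>t<N. c t = 0" by simp
qed

theorem Bm_basis: "is_K_basis K N B"
  using gal Bm_independent is_K_basis_of_independent[OF subfield]
  by (auto simp: galois_ext_of_degree_def)

theorem ev_thpow_eq_Diag:
  assumes "j \<in> Delta n m"
  shows "mat_of_rows N [ev (Gal K) N B (delta (thpow th j))]
    = mat_of_rows N [vec N (\<lambda>t. mono (X t) j)] * DiagM N B"
proof (rule eq_matI)
  fix i t assume "i < dim_row (mat_of_rows N [vec N (\<lambda>t. mono (X t) j)] * DiagM N B)"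
    "t < dim_col (mat_of_rows N [vec N (\<lambda>t. mono (X t) j)] * DiagM N B)"
  then have "i = 0" "t < N" by auto
  then show "mat_of_rows N [ev (Gal K) N B (delta (thpow th j))] $$ (i, t)
    = (mat_of_rows N [vec N (\<lambda>t. mono (X t) j)] * DiagM N B) $$ (i, t)"
    using assms by (simp add: mat_of_rows_def mat_mult_DiagM ev_delta finite_Gal thpow_Gal thpow_Bm)
qed (simp_all add: mat_of_rows_def)

lemma monomials_independent:
  assumes J: "J \<subseteq> Delta n m" and vanish: "\<forall>t<N. (\<Sum>j\<in>J. d j * mono (X t) j) = 0"
  shows "\<forall>j\<in>J. d j = 0"
proof (rule Dedekind_independence)
  show "finite J" using J finite_Delta finite_subset by blast
  show "inj_on (thpow th) J" using bij J by (auto simp: bij_betw_def intro: inj_on_subset)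
  show Gal: "\<forall>j\<in>J. thpow th j \<in> Gal K" using J thpow_Gal by auto
  have "\<forall>t<N. (\<Sum>j\<in>J. d j * thpow th j (B t)) = 0"
  proof (intro allI impI)
    fix t assume t: "t < N"
    have "(\<Sum>j\<in>J. d j * thpow th j (B t)) = (\<Sum>j\<in>J. d j * mono (X t) j) * B t"
      using J t by (auto simp: sum_distrib_right thpow_Bm mult.assoc intro!: sum.cong)
    then show "(\<Sum>j\<in>J. d j * thpow th j (B t)) = 0" using vanish t by simp
  qed
  then show "\<forall>x. (\<Sum>j\<in>J. d j * thpow th j x) = 0"
    using Gal_combination_eq_0_on_basis[OF Bm_basis Gal] by blast
qed

lemma HRM_eq_Delta_monomials:
  fixes r :: nat
  defines "D \<equiv> {j\<in>Delta n m. sum_list j \<le> r}"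
  shows "HRM K N X r m = {vec N (\<lambda>t. \<Sum>j\<in>D. d j * mono (X t) j) | d. \<forall>j\<in>D. d j \<in> K}"
proof -
  define E where "E = {e. length e = m \<and> sum_list e \<le> r}"
  define red where "red e = map (\<lambda>x. x mod n) e" for e
  have finE: "finite E" unfolding E_def by (rule finite_exponents_bounded_degree)
  have DE: "D \<subseteq> E" by (auto simp: D_def E_def Delta_def)
  have finD: "finite D" using finite_Delta by (simp add: D_def)
  \<comment> \<open>reducing exponents mod \<open>n\<close> keeps the monomial on \<open>X\<close> and does not raise the degree\<close>
  have red_D: "red e \<in> D" if "e \<in> E" for e
    using that mod_exponents_in_Delta[OF n_pos, of e m r] by (simp add: red_def D_def E_def)
  have mono_red: "mono (X t) (red e) = mono (X t) e" for t e
    unfolding red_def by (rule mono_mod_exponents) (simp add: X_power_n)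
  show ?thesis
    unfolding HRM_def E_def[symmetric]
  proof (intro equalityI subsetI)
    fix v assume "v \<in> {vec N (\<lambda>t. \<Sum>e\<in>E. c e * mono (X t) e) | c. \<forall>e. c e \<in> K}"
    then obtain c where c: "\<forall>e. c e \<in> K" "v = vec N (\<lambda>t. \<Sum>e\<in>E. c e * mono (X t) e)" by blast
    define d where "d j = (\<Sum>e\<in>{e\<in>E. red e = j}. c e)" for j
    have "(\<Sum>e\<in>E. c e * mono (X t) e) = (\<Sum>j\<in>D. d j * mono (X t) j)" for t
    proof -
      have "red ` E \<subseteq> D" using red_D by blast
      then have "(\<Sum>e\<in>E. c e * mono (X t) e) = (\<Sum>j\<in>D. \<Sum>e\<in>{e\<in>E. red e = j}. c e * mono (X t) e)"
        by (rule sum.group[OF finE finD, symmetric])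
      also have "\<dots> = (\<Sum>j\<in>D. d j * mono (X t) j)"
        unfolding d_def sum_distrib_right
        by (intro sum.cong refl) (metis (mono_tags) mem_Collect_eq mono_red)
      finally show ?thesis .
    qed
    then have "v = vec N (\<lambda>t. \<Sum>j\<in>D. d j * mono (X t) j)" using c(2) by simp
    moreover have "\<forall>j\<in>D. d j \<in> K" using c(1) by (simp add: d_def subfield_sum[OF subfield])
    ultimately show "v \<in> {vec N (\<lambda>t. \<Sum>j\<in>D. d j * mono (X t) j) | d. \<forall>j\<in>D. d j \<in> K}" by blast
  next
    fix v assume "v \<in> {vec N (\<lambda>t. \<Sum>j\<in>D. d j * mono (X t) j) | d. \<forall>j\<in>D. d j \<in> K}"
    then obtain d where d: "\<forall>j\<in>D. d j \<in> K" "v = vec N (\<lambda>t. \<Sum>j\<in>D. d j * mono (X t) j)" by blast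
    define c where "c e = (if e \<in> D then d e else 0)" for e
    have "(\<Sum>e\<in>E. c e * mono (X t) e) = (\<Sum>j\<in>D. d j * mono (X t) j)" for t
      by (rule sum.mono_neutral_cong_right[OF finE DE]) (auto simp: c_def)
    then have "v = vec N (\<lambda>t. \<Sum>e\<in>E. c e * mono (X t) e)" using d(2) by simp
    moreover have "\<forall>e. c e \<in> K" using d(1) subfield_zero[OF subfield] by (simp add: c_def)
    ultimately show "v \<in> {vec N (\<lambda>t. \<Sum>e\<in>E. c e * mono (X t) e) | c. \<forall>e. c e \<in> K}" by blast
  qed
qed

lemma ev_RM_theta_eq_scaled_monomials:
  fixes r :: nat
  defines "D \<equiv> {j\<in>Delta n m. sum_list j \<le> r}"
  shows "ev (Gal K) N B ` RM_theta th n m r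
    = {vec N (\<lambda>t. \<Sum>j\<in>D. d j * (mono (X t) j * B t)) | d. \<forall>j\<in>D. d j \<in> UNIV}"
proof -
  have "ev (Gal K) N B (\<lambda>g. \<Sum>j\<in>D. d j * delta (thpow th j) g)
      = vec N (\<lambda>t. \<Sum>j\<in>D. d j * (mono (X t) j * B t))" for d
  proof -
    have "\<forall>j\<in>D. thpow th j \<in> Gal K" by (simp add: D_def thpow_Gal)
    then have "ev (Gal K) N B (\<lambda>g. \<Sum>j\<in>D. d j * delta (thpow th j) g)
        = vec N (\<lambda>t. \<Sum>j\<in>D. d j * thpow th j (B t))"
      by (rule ev_sum_delta[OF finite_Gal])
    also have "\<dots> = vec N (\<lambda>t. \<Sum>j\<in>D. d j * (mono (X t) j * B t))"
      by (intro eq_vecI) (auto simp: D_def thpow_Bm intro!: sum.cong)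
    finally show ?thesis .
  qed
  then show ?thesis
    unfolding RM_theta_def D_def[symmetric] by (auto simp: image_def)
qed

theorem generator_matrices:
  assumes js: "bij_betw js {0..<k} {j\<in>Delta n m. sum_list j \<le> r}"
  defines "Y \<equiv> mat k N (\<lambda>(a, t). mono (X t) (js a))"
  shows "gen_matrix K (HRM K N X r m) Y"
    and "gen_matrix UNIV (ev (Gal K) N B ` RM_theta th n m r) (Y * DiagM N B)"
proof -
  let ?D = "{j\<in>Delta n m. sum_list j \<le> r}"
  have indep: "\<forall>d. (\<forall>j\<in>?D. d j \<in> F) \<longrightarrow> (\<forall>t<N. (\<Sum>j\<in>?D. d j * mono (X t) j) = 0)
      \<longrightarrow> (\<forall>j\<in>?D. d j = 0)" for F
    by (intro allI impI monomials_independent) auto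
  have "rows_indep K Y"
    unfolding Y_def by (rule rows_indep_reindex[OF js indep])
  moreover have "row_span K Y = HRM K N X r m"
    unfolding Y_def HRM_eq_Delta_monomials by (rule row_span_reindex[OF js])
  ultimately show "gen_matrix K (HRM K N X r m) Y"
    by (simp add: gen_matrix_def)
  have YD: "Y * DiagM N B = mat k N (\<lambda>(a, t). mono (X t) (js a) * B t)"
    unfolding Y_def mat_mult_DiagM by (simp add: case_prod_beta)
  have indep_B: "\<forall>d. (\<forall>j\<in>?D. d j \<in> UNIV) \<longrightarrow> (\<forall>t<N. (\<Sum>j\<in>?D. d j * (mono (X t) j * B t)) = 0)
      \<longrightarrow> (\<forall>j\<in>?D. d j = 0)"
  proof (intro allI impI)
    fix d assume vanish: "\<forall>t<N. (\<Sum>j\<in>?D. d j * (mono (X t) j * B t)) = 0"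
    have "(\<Sum>j\<in>?D. d j * mono (X t) j) = 0" if "t < N" for t
      using vanish[rule_format, OF that] Bm_nonzero[OF that]
      by (simp add: mult.assoc[symmetric] sum_distrib_right[symmetric])
    then show "\<forall>j\<in>?D. d j = 0" by (intro monomials_independent) auto
  qed
  have "rows_indep UNIV (Y * DiagM N B)"
    unfolding YD by (rule rows_indep_reindex[OF js indep_B])
  moreover have "row_span UNIV (Y * DiagM N B) = ev (Gal K) N B ` RM_theta th n m r"
    unfolding YD ev_RM_theta_eq_scaled_monomials by (rule row_span_reindex[OF js])
  ultimately show "gen_matrix UNIV (ev (Gal K) N B ` RM_theta th n m r) (Y * DiagM N B)"
    by (simp add: gen_matrix_def)
qed

end

theorem mainTheorem18:
  fixes K :: "'l::field set" and n m r N :: nat and z :: 'l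
    and th :: "nat \<Rightarrow> 'l \<Rightarrow> 'l" and alpha :: "nat \<Rightarrow> 'l"
  assumes n2: "n \<ge> 2"
    and N_def: "N = n ^ m"
    and gal: "galois_ext_of_degree K N"
    and zK: "z \<in> K" and zprim: "primitive_root n z"
    and thG: "\<forall>k<m. th k \<in> Gal K"
    and comm: "\<forall>k<m. \<forall>l<m. th k \<circ> th l = th l \<circ> th k"
    and bij: "bij_betw (thpow th) (Delta n m) (Gal K)"
    and anz: "\<forall>k<m. alpha k \<noteq> 0"
    and a_fix: "\<forall>k<m. \<forall>l<m. k \<noteq> l \<longrightarrow> th k (alpha l) = alpha l"
    and a_mul: "\<forall>k<m. th k (alpha k) = z * alpha k"
    and r_le: "r \<le> m * (n - 1)"
  shows "is_K_basis K N (Bm n m alpha)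
    \<and> (\<forall>j\<in>Delta n m.
         mat_of_rows N [ev (Gal K) N (Bm n m alpha) (delta (thpow th j))]
         = mat_of_rows N [vec N (\<lambda>t. mono (Xpt n m z t) j)] * DiagM N (Bm n m alpha))
    \<and> (\<forall>k js. bij_betw js {0..<k} {j\<in>Delta n m. sum_list j \<le> r} \<longrightarrow>
         (let Y = mat k N (\<lambda>(a, t). mono (Xpt n m z t) (js a)) in
            gen_matrix K (HRM K N (Xpt n m z) r m) Y
          \<and> gen_matrix UNIV (ev (Gal K) N (Bm n m alpha) ` RM_theta th n m r)
               (Y * DiagM N (Bm n m alpha))))"
proof -
  interpret kummer_extension K n m N z th alpha
    using n2 N_def gal zK zprim thG bij anz a_fix a_mul by unfold_locales auto
  show ?thesis
    unfolding Let_def using Bm_basis ev_thpow_eq_Diag generator_matrices by blast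
qed

end
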